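(* Let $\mathcal T$ be a trie with $n$ nodes over an alphabet $\Sigma$ of size $\sigma$ and let $k\ge0$ be an integer. Then it is possible to represent $\mathcal T$ (i.e., encode it so that it can be uniquely reconstructed) in a number of bits upper-bounded by $n\mathcal H_k(\mathcal T)+2+(\sigma+1)\sigma^k\lceil\log n\rceil$.
   Context: A trie over a finite totally ordered alphabet $\Sigma$ is a rooted ordered tree with edges labeled by symbols of $\Sigma$ such that edges leaving the same node have distinct labels and siblings are ordered by their incoming labels. For a node $u$, $out(u)$ is the set of labels of edges leaving $u$; $\lambda(u)$ is the label of the edge entering $u$, with $\lambda(\text{root})=\#$, a new symbol not in $\Sigma$; $\pi(u)$ is the parent of $u$, with $\pi(\text{root})=\text{root}$. The $k$-th order context is $\lambda_0(u)=\epsilon$ and $\lambda_k(u)=\lambda_{k-1}(\pi(u))\cdot\lambda(u)$ (so it consists of the last $k$ labels on the root-to-$u$ path, left-padded with $\#$ if the depth of $u$ is less than $k$). For a length-$k$ string $w$ and $c\in\Sigma$, $n_w=|\{u:\lambda_k(u)=w\}|$ and $n_{w,c}=|\{u:\lambda_k(u)=w,\ c\in out(u)\}|$. Logarithms are base 2 and $0\log(x/0)=0$. The $k$-th order empirical entropy is $\mathcal H_k(\mathcal T)=\sum_{w}\sum_{c\in\Sigma}\left[\frac{n_{w,c}}{n}\log\frac{n_w}{n_{w,c}}+\frac{n_w-n_{w,c}}{n}\log\frac{n_w}{n_w-n_{w,c}}\right]$, the outer sum ranging over all length-$k$ contexts $w$ with $n_w>0$. *)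

theory Defs
  imports Complex_Main
begin

text \<open>A trie over the alphabet Alph is represented by its set of nodes, each node being
  identified with the string of edge labels on the root-to-node path. Since sibling edges carry
  distinct labels and are ordered by their labels, this set determines the ordered labelled tree.\<close>

definition is_trie :: "'a set \<Rightarrow> 'a list set \<Rightarrow> bool" where
  "is_trie Alph T \<longleftrightarrow> finite T \<and> [] \<in> T \<and> T \<subseteq> lists Alph \<and>
     (\<forall>u c. u @ [c] \<in> T \<longrightarrow> u \<in> T)"

definition tparent :: "'a list \<Rightarrow> 'a list" where
  "tparent u = butlast u"

text \<open>incoming label lambda(u); None plays the role of the fresh symbol # (lambda(root) = #)\<close>
definition tlabel :: "'a list \<Rightarrow> 'a option" where
  "tlabel u = (if u = [] then None else Some (last u))"

fun tctx :: "nat \<Rightarrow> 'a list \<Rightarrow> 'a option list" where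
  "tctx 0 u = []"
| "tctx (Suc k) u = tctx k (tparent u) @ [tlabel u]"

definition tout :: "'a list set \<Rightarrow> 'a list \<Rightarrow> 'a set" where
  "tout T u = {c. u @ [c] \<in> T}"

definition n_ctx :: "'a list set \<Rightarrow> nat \<Rightarrow> 'a option list \<Rightarrow> nat" where
  "n_ctx T k w = card {u \<in> T. tctx k u = w}"

definition n_ctx_sym :: "'a list set \<Rightarrow> nat \<Rightarrow> 'a option list \<Rightarrow> 'a \<Rightarrow> nat" where
  "n_ctx_sym T k w c = card {u \<in> T. tctx k u = w \<and> c \<in> tout T u}"

definition xlog :: "real \<Rightarrow> real \<Rightarrow> real" where
  "xlog x y = (if x = 0 then 0 else x * log 2 (y / x))"

text \<open>k-th order empirical entropy H_k(T); n = number of nodes; the outer sum ranges over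
  the length-k contexts w with n_w > 0, i.e. the contexts of nodes of T.\<close>
definition trie_entropy :: "'a set \<Rightarrow> nat \<Rightarrow> 'a list set \<Rightarrow> real" where
  "trie_entropy Alph k T =
     (\<Sum>w \<in> tctx k ` T. \<Sum>c \<in> Alph.
        xlog (real (n_ctx_sym T k w c)) (real (n_ctx T k w)) / real (card T)
      + xlog (real (n_ctx T k w) - real (n_ctx_sym T k w c)) (real (n_ctx T k w)) / real (card T))"

end

theory Submission
  imports Defs "HOL-Library.List_Lenlexorder" "HOL-Library.FuncSet"
begin

text \<open>
  The statistics of a trie are its nodes of depth at most k and the counts n_{w,c} for the
  contexts w of nodes of depth at least k; together with n they determine all n_w and n_{w,c}.
  Given its statistics, a trie is determined by the sets of ranks, among the n_w nodes of context
  w, of the nodes having a c-child, from which it can be rebuilt level by level. Hence at most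
  prod C(n_w, n_{w,c}) <= 2^(n H_k) tries share their statistics, while for s = |Sigma| >= 2 and
  n >= 3 there are at most 2^(sum_{i<=k} s^i) n^(s^(k+1)) <= 2^D statistics, where
  D = (s+1) s^k ceil(log n); the remaining cases are counted directly. So at most 2^(h+D) tries
  have n H_k <= h, which leaves room to give each trie its own codeword of length
  floor(n H_k + 2 + D).
\<close>

section \<open>Codes with prescribed lengths\<close>

lemma ex_bool_list_notin:
  assumes "finite A" "card A < 2 ^ m"
  obtains xs :: "bool list" where "length xs = m" "xs \<notin> A"
proof -
  have "card {xs :: bool list. length xs = m} = 2 ^ m"
    using card_lists_length_eq[of "UNIV :: bool set" m] by simp
  then have "\<not> {xs :: bool list. length xs = m} \<subseteq> A"
    using card_mono[OF assms(1), of "{xs. length xs = m}"] assms(2) by linarith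
  then show ?thesis using that by blast
qed

lemma ex_inj_code_with_lengths:
  fixes L :: "'b \<Rightarrow> nat"
  assumes "finite X" and "\<And>l. card {x\<in>X. L x \<le> l} \<le> 2 ^ l"
  shows "\<exists>E :: 'b \<Rightarrow> bool list. inj_on E X \<and> (\<forall>x\<in>X. length (E x) = L x)"
  using assms
proof (induction X rule: finite_ranking_induct[where f = L])
  case empty
  then show ?case by simp
next
  case (insert x0 X)
  have "card {x\<in>X. L x \<le> l} \<le> 2 ^ l" for l
    using card_mono[of "{x\<in>insert x0 X. L x \<le> l}" "{x\<in>X. L x \<le> l}"] insert.hyps(1) insert.prems[of l]
    by fastforce
  then obtain E :: "'b \<Rightarrow> bool list" where E: "inj_on E X" "\<forall>x\<in>X. length (E x) = L x"
    using insert.IH by blast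
  show ?case
  proof (cases "x0 \<in> X")
    case True
    then show ?thesis using E insert_absorb by metis
  next
    case False
    have "{x\<in>insert x0 X. L x \<le> L x0} = insert x0 X"
      using insert.hyps(2) by auto
    then have "card (E ` X) < card {x\<in>insert x0 X. L x \<le> L x0}"
      using insert.hyps(1) False card_image_le[OF insert.hyps(1), of E] by simp
    also have "\<dots> \<le> 2 ^ L x0" by (rule insert.prems)
    finally obtain xs where xs: "length xs = L x0" "xs \<notin> E ` X"
      using ex_bool_list_notin[of "E ` X"] insert.hyps(1) by blast
    have "inj_on (E(x0 := xs)) (insert x0 X)"
      using E(1) xs(2) False by (auto simp: inj_on_def)
    moreover have "\<forall>x\<in>insert x0 X. length ((E(x0 := xs)) x) = L x"
      using E(2) xs(1) by auto
    ultimately show ?thesis by blast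
  qed
qed

lemma ex_inj_code_length_le:
  fixes B :: "'b \<Rightarrow> real"
  assumes "finite X" and nonneg: "\<And>x. x \<in> X \<Longrightarrow> 0 \<le> B x"
    and card_le: "\<And>h. real (card {x\<in>X. B x \<le> h}) \<le> 2 powr (h - 1)"
  shows "\<exists>E :: 'b \<Rightarrow> bool list. inj_on E X \<and> (\<forall>x\<in>X. real (length (E x)) \<le> B x)"
proof -
  have lengths: "card {x\<in>X. nat \<lfloor>B x\<rfloor> \<le> l} \<le> 2 ^ l" for l
  proof -
    have "B x \<le> real l + 1" if "nat \<lfloor>B x\<rfloor> \<le> l" for x
      using that by (simp add: nat_le_iff floor_le_iff)
    then have "card {x\<in>X. nat \<lfloor>B x\<rfloor> \<le> l} \<le> card {x\<in>X. B x \<le> real l + 1}"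
      using \<open>finite X\<close> by (intro card_mono) auto
    then have "real (card {x\<in>X. nat \<lfloor>B x\<rfloor> \<le> l}) \<le> 2 powr (real l + 1 - 1)"
      using card_le[of "real l + 1"] by linarith
    also have "\<dots> = real (2 ^ l)"
      by (simp add: powr_realpow)
    finally show ?thesis
      by (simp only: of_nat_le_iff)
  qed
  obtain E :: "'b \<Rightarrow> bool list" where "inj_on E X" "\<forall>x\<in>X. length (E x) = nat \<lfloor>B x\<rfloor>"
    using ex_inj_code_with_lengths[OF \<open>finite X\<close> lengths] by blast
  moreover have "real (nat \<lfloor>B x\<rfloor>) \<le> B x" if "x \<in> X" for x
    using nonneg[OF that] by simp
  ultimately show ?thesis
    by auto
qed

section \<open>Binomial coefficients and entropy\<close>

lemma choose_mult_powers_le: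
  assumes "j \<le> m"
  shows "real (m choose j) * (real j ^ j * real (m - j) ^ (m - j)) \<le> real m ^ m"
proof -
  have "real m ^ m = (real j + real (m - j)) ^ m"
    using assms by simp
  also have "\<dots> = (\<Sum>i\<le>m. real (m choose i) * real j ^ i * real (m - j) ^ (m - i))"
    by (rule binomial_ring)
  also have "\<dots> \<ge> real (m choose j) * real j ^ j * real (m - j) ^ (m - j)"
    by (rule member_le_sum) (use assms in auto)
  finally show ?thesis
    by (simp only: mult.assoc)
qed

lemma powr_xlog:
  assumes "m > 0"
  shows "2 powr xlog (real j) (real m) = (real m / real j) ^ j"
proof (cases "j = 0")
  case False
  then have "2 powr xlog (real j) (real m) = (2 powr log 2 (real m / real j)) powr real j"
    by (simp add: xlog_def powr_powr mult.commute)
  also have "\<dots> = (real m / real j) ^ j"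
    using assms False by (simp add: powr_realpow)
  finally show ?thesis .
qed (simp add: xlog_def)

lemma choose_le_powr_xlog:
  assumes "j \<le> m"
  shows "real (m choose j) \<le> 2 powr (xlog (real j) (real m) + xlog (real m - real j) (real m))"
proof (cases "m = 0")
  case False
  have "2 powr (xlog (real j) (real m) + xlog (real m - real j) (real m))
      = (real m / real j) ^ j * (real m / real (m - j)) ^ (m - j)"
    using False assms by (simp add: powr_add powr_xlog flip: of_nat_diff)
  also have "\<dots> = real m ^ m / (real j ^ j * real (m - j) ^ (m - j))"
    using assms by (simp add: power_divide power_add[symmetric])
  finally have "2 powr (xlog (real j) (real m) + xlog (real m - real j) (real m))
      = real m ^ m / (real j ^ j * real (m - j) ^ (m - j))" .
  moreover have "real j ^ j > 0" "real (m - j) ^ (m - j) > 0"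
    by (cases j; simp) (cases "m - j"; simp)
  ultimately show ?thesis
    using choose_mult_powers_le[OF assms] by (simp add: pos_le_divide_eq)
qed (use assms in \<open>simp add: xlog_def\<close>)

lemma xlog_nonneg: "0 \<le> x \<Longrightarrow> x \<le> y \<Longrightarrow> 0 \<le> xlog x y"
  by (auto simp: xlog_def)

lemma card_eq_sum_card_fibres:
  assumes "finite A" "finite I" "f ` A \<subseteq> I"
  shows "card A = (\<Sum>i\<in>I. card {a\<in>A. f a = i})"
  using sum.group[OF assms, of "\<lambda>_. 1::nat"] by simp

lemma card_less_strict_mono:
  fixes x y :: "'a::linorder"
  assumes "finite A" "x \<in> A" "x < y"
  shows "card {z\<in>A. z < x} < card {z\<in>A. z < y}"
  by (rule psubset_card_mono) (use assms in \<open>auto intro: less_trans\<close>)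

lemma inj_on_card_less:
  fixes A :: "'a::linorder set"
  assumes "finite A"
  shows "inj_on (\<lambda>x. card {z\<in>A. z < x}) A"
proof (rule inj_onI, rule ccontr)
  fix x y
  assume "x \<in> A" "y \<in> A" "card {z\<in>A. z < x} = card {z\<in>A. z < y}" "x \<noteq> y"
  then show False
    using card_less_strict_mono[OF assms] by (cases x y rule: linorder_cases) fastforce+
qed

lemma card_less_less_card:
  fixes x :: "'a::linorder"
  assumes "finite A" "x \<in> A"
  shows "card {z\<in>A. z < x} < card A"
  by (rule psubset_card_mono) (use assms in auto)

lemma tctx_eq: "tctx k u = replicate (k - length u) None @ map Some (drop (length u - k) u)"
proof (induction k arbitrary: u)
  case (Suc k)
  show ?case
  proof (cases u rule: rev_exhaust)
    case (snoc p c)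
    have "length p - k \<le> length p" by simp
    then show ?thesis
      using Suc by (simp add: snoc tparent_def tlabel_def Suc_diff_le)
  qed (use Suc in \<open>simp add: tparent_def tlabel_def replicate_append_same\<close>)
qed simp

lemma length_tctx [simp]: "length (tctx k u) = k"
  by (simp add: tctx_eq)

lemma tctx_Suc_eq_Cons: "tctx (Suc k) u = hd (tctx (Suc k) u) # tctx k u"
proof -
  have "tl (tctx (Suc k) u) = tctx k u"
  proof (cases "length u \<le> k")
    case False
    then have "length u - k = Suc (length u - Suc k)" by simp
    then have "drop (length u - k) u = tl (drop (length u - Suc k) u)"
      by (simp add: drop_Suc tl_drop)
    then show ?thesis
      using False by (simp add: tctx_eq map_tl)
  qed (auto simp: tctx_eq Suc_diff_le)
  then show ?thesis
    using length_tctx[of "Suc k" u] by (cases "tctx (Suc k) u") auto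
qed

lemma tctx_snoc_None_imp_Nil: "tctx (Suc k) u = w @ [None] \<Longrightarrow> u = []"
  by (auto simp: tlabel_def split: if_splits)

lemma set_tctx_subset: "u \<in> lists Alph \<Longrightarrow> set (tctx k u) \<subseteq> insert None (Some ` Alph)"
  by (auto simp: tctx_eq dest: in_set_dropD)

lemma is_trie_finite: "is_trie Alph T \<Longrightarrow> finite T"
  by (simp add: is_trie_def)

lemma is_trie_Nil: "is_trie Alph T \<Longrightarrow> [] \<in> T"
  by (simp add: is_trie_def)

lemma is_trie_lists: "is_trie Alph T \<Longrightarrow> u \<in> T \<Longrightarrow> u \<in> lists Alph"
  by (auto simp: is_trie_def)

lemma is_trie_prefix:
  assumes "is_trie Alph T" "u @ v \<in> T"
  shows "u \<in> T"
  using assms(2)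
proof (induction v rule: rev_induct)
  case (snoc c v)
  then have "(u @ v) @ [c] \<in> T" by simp
  then have "u @ v \<in> T"
    using assms(1) unfolding is_trie_def by blast
  then show ?case by (rule snoc.IH)
qed simp

lemma tout_subset: "is_trie Alph T \<Longrightarrow> tout T u \<subseteq> Alph"
  by (auto simp: tout_def is_trie_def)

lemma length_less_card_trie:
  assumes "is_trie Alph T" "u \<in> T"
  shows "length u < card T"
proof -
  have "(\<lambda>i. take i u) ` {..length u} \<subseteq> T"
    using is_trie_prefix[OF assms(1)] assms(2) by (metis append_take_drop_id image_subsetI)
  moreover have "inj_on (\<lambda>i. take i u) {..length u}"
  proof (rule inj_onI)
    fix i j assume "i \<in> {..length u}" "j \<in> {..length u}" "take i u = take j u"
    then have "length (take i u) = length (take j u)" "i \<le> length u" "j \<le> length u"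
      by auto
    then show "i = j" by simp
  qed
  ultimately have "card {..length u} \<le> card T"
    using card_inj_on_le[OF _ _ is_trie_finite[OF assms(1)]] by blast
  then show ?thesis by simp
qed

lemma tries_subset_Pow:
  "{T. is_trie Alph T \<and> card T = n} \<subseteq> Pow {xs. set xs \<subseteq> Alph \<and> length xs < n}"
proof (intro subsetI PowI)
  fix T u assume "T \<in> {T. is_trie Alph T \<and> card T = n}" "u \<in> T"
  then show "u \<in> {xs. set xs \<subseteq> Alph \<and> length xs < n}"
    using length_less_card_trie[of Alph T u] is_trie_lists[of Alph T u] by (auto simp: in_lists_conv_set)
qed

lemma finite_lists_length_less:
  assumes "finite Alph"
  shows "finite {xs. set xs \<subseteq> Alph \<and> length xs < n}"
  by (rule finite_subset[OF _ finite_lists_length_le[OF assms, of n]]) auto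

lemma finite_tries:
  assumes "finite Alph"
  shows "finite {T. is_trie Alph T \<and> card T = n}"
  using finite_lists_length_less[OF assms] by (intro finite_subset[OF tries_subset_Pow]) simp

lemma card_tries_le:
  assumes "finite Alph"
  shows "card {T. is_trie Alph T \<and> card T = n} \<le> 2 ^ (\<Sum>i<n. card Alph ^ i)"
proof -
  let ?U = "{xs. set xs \<subseteq> Alph \<and> length xs < n}"
  have "card ?U = (\<Sum>i<n. card Alph ^ i)"
  proof (cases n)
    case (Suc m)
    then have "?U = {xs. set xs \<subseteq> Alph \<and> length xs \<le> m}"
      by auto
    then show ?thesis
      using card_lists_length_le[OF assms, of m] Suc by (simp add: lessThan_Suc_atMost)
  qed simp
  moreover have "finite ?U"
    by (rule finite_lists_length_less[OF assms])
  moreover have "card {T. is_trie Alph T \<and> card T = n} \<le> card (Pow ?U)"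
    using \<open>finite ?U\<close> by (intro card_mono tries_subset_Pow) simp
  ultimately show ?thesis
    using \<open>finite ?U\<close> by (simp add: card_Pow)
qed

lemma n_ctx_sym_less_card:
  assumes "is_trie Alph T"
  shows "n_ctx_sym T k w c < card T"
proof -
  let ?P = "{u \<in> T. tctx k u = w \<and> c \<in> tout T u}"
  have "(\<lambda>u. u @ [c]) ` ?P \<subseteq> T - {[]}"
    by (auto simp: tout_def)
  moreover have "inj_on (\<lambda>u. u @ [c]) ?P"
    by (rule inj_onI) simp
  ultimately have "n_ctx_sym T k w c \<le> card (T - {[]})"
    unfolding n_ctx_sym_def using card_inj_on_le is_trie_finite[OF assms] by blast
  also have "\<dots> < card T"
    using is_trie_finite[OF assms] is_trie_Nil[OF assms] by (rule card_Diff1_less)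
  finally show ?thesis .
qed

lemma n_ctx_sym_le_n_ctx: "finite T \<Longrightarrow> n_ctx_sym T k w c \<le> n_ctx T k w"
  unfolding n_ctx_sym_def n_ctx_def by (rule card_mono) auto

lemma n_ctx_pos_iff: "finite T \<Longrightarrow> 0 < n_ctx T k w \<longleftrightarrow> w \<in> tctx k ` T"
  by (auto simp: n_ctx_def card_gt_0_iff)

lemma card_mult_trie_entropy:
  assumes "finite T"
  shows "real (card T) * trie_entropy Alph k T =
    (\<Sum>w\<in>tctx k ` T. \<Sum>c\<in>Alph. xlog (real (n_ctx_sym T k w c)) (real (n_ctx T k w))
      + xlog (real (n_ctx T k w) - real (n_ctx_sym T k w c)) (real (n_ctx T k w)))"
  using assms unfolding trie_entropy_def
  by (cases "T = {}") (simp_all add: add_divide_distrib[symmetric] sum_divide_distrib[symmetric])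

lemma trie_entropy_nonneg:
  assumes "finite T"
  shows "0 \<le> trie_entropy Alph k T"
  unfolding trie_entropy_def using n_ctx_sym_le_n_ctx[OF assms]
  by (intro sum_nonneg add_nonneg_nonneg divide_nonneg_nonneg xlog_nonneg) auto

lemma prod_choose_le_powr_entropy:
  assumes "finite T"
  shows "(\<Prod>(w, c)\<in>tctx k ` T \<times> Alph. real (n_ctx T k w choose n_ctx_sym T k w c))
    \<le> 2 powr (real (card T) * trie_entropy Alph k T)"
proof -
  have "(\<Prod>(w, c)\<in>tctx k ` T \<times> Alph. real (n_ctx T k w choose n_ctx_sym T k w c))
    \<le> (\<Prod>(w, c)\<in>tctx k ` T \<times> Alph. 2 powr (xlog (real (n_ctx_sym T k w c)) (real (n_ctx T k w))
      + xlog (real (n_ctx T k w) - real (n_ctx_sym T k w c)) (real (n_ctx T k w))))"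
    using choose_le_powr_xlog[OF n_ctx_sym_le_n_ctx[OF assms]] by (intro prod_mono) auto
  also have "\<dots> = 2 powr (real (card T) * trie_entropy Alph k T)"
    unfolding card_mult_trie_entropy[OF assms]
    by (simp add: powr_sum sum.cartesian_product case_prod_beta)
  finally show ?thesis .
qed

section \<open>Reconstruction from child ranks\<close>

lemma length_le_if_list_less: "(v :: 'a::ord list) < u \<Longrightarrow> length v \<le> length u"
  by (auto simp: list_less_def lenlex_conv)

(* The paper's bit vector B_{w,c}: the positions, in the length-lexicographic order of
   List_Lenlexorder, of those nodes of context w that have a c-child. *)
definition child_ranks :: "'a::linorder list set \<Rightarrow> nat \<Rightarrow> 'a option list \<Rightarrow> 'a \<Rightarrow> nat set" where
  "child_ranks T k w c =
     (\<lambda>u. card {v\<in>{v\<in>T. tctx k v = w}. v < u}) ` {u\<in>T. tctx k u = w \<and> c \<in> tout T u}"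

lemma child_ranks_subset: "finite T \<Longrightarrow> child_ranks T k w c \<subseteq> {..<n_ctx T k w}"
  using card_less_less_card[of "{v\<in>T. tctx k v = w}"] by (auto simp: child_ranks_def n_ctx_def)

lemma card_child_ranks: "finite T \<Longrightarrow> card (child_ranks T k w c) = n_ctx_sym T k w c"
  unfolding child_ranks_def n_ctx_sym_def
  by (rule card_image, rule inj_on_subset[OF inj_on_card_less]) auto

lemma child_ranks_eq_empty:
  assumes "is_trie Alph S" "(w, c) \<notin> tctx k ` S \<times> Alph"
  shows "child_ranks S k w c = {}"
  using assms tout_subset[OF assms(1)] by (auto simp: child_ranks_def)

lemma snoc_mem_if_child_ranks_eq:
  assumes S1: "is_trie Alph S1" and S2: "is_trie Alph S2"
    and ranks: "\<And>w c. child_ranks S1 k w c = child_ranks S2 k w c"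
    and shorter: "\<And>v. length v \<le> length p \<Longrightarrow> v \<in> S1 \<longleftrightarrow> v \<in> S2"
    and "p @ [c] \<in> S1"
  shows "p @ [c] \<in> S2"
proof -
  let ?A = "\<lambda>S. {v\<in>S. tctx k v = tctx k p}"
  have p: "p \<in> S1" "p \<in> S2"
    using is_trie_prefix[OF S1 \<open>p @ [c] \<in> S1\<close>] shorter by auto
  have "{v\<in>?A S1. v < p} = {v\<in>?A S2. v < p}"
    using shorter length_le_if_list_less by blast
  moreover have "card {v\<in>?A S1. v < p} \<in> child_ranks S1 k (tctx k p) c"
    using p(1) \<open>p @ [c] \<in> S1\<close> by (auto simp: child_ranks_def tout_def)
  ultimately obtain u where u: "u \<in> ?A S2" "c \<in> tout S2 u"
    and "card {v\<in>?A S2. v < u} = card {v\<in>?A S2. v < p}"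
    using ranks by (auto simp: child_ranks_def)
  then have "u = p"
    using inj_on_card_less[of "?A S2"] is_trie_finite[OF S2] p(2) by (auto dest: inj_onD)
  then show ?thesis
    using u(2) by (simp add: tout_def)
qed

lemma trie_eq_if_child_ranks_eq:
  assumes S1: "is_trie Alph S1" and S2: "is_trie Alph S2"
    and ranks: "\<And>w c. child_ranks S1 k w c = child_ranks S2 k w c"
  shows "S1 = S2"
proof -
  have "u \<in> S1 \<longleftrightarrow> u \<in> S2" for u
  proof (induction "length u" arbitrary: u rule: less_induct)
    case less
    show ?case
    proof (cases u rule: rev_exhaust)
      case Nil
      then show ?thesis using is_trie_Nil[OF S1] is_trie_Nil[OF S2] by simp
    next
      case (snoc p c)
      then have "length v \<le> length p \<Longrightarrow> v \<in> S1 \<longleftrightarrow> v \<in> S2" for v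
        using less by simp
      then show ?thesis
        using snoc_mem_if_child_ranks_eq[OF S1 S2 ranks] snoc_mem_if_child_ranks_eq[OF S2 S1 ranks[symmetric]]
        unfolding snoc by blast
    qed
  qed
  then show ?thesis by blast
qed

section \<open>Tries with equal statistics\<close>

(* Contexts of the nodes of depth at least k, i.e. those not containing the padding symbol #. *)
definition full_ctxs :: "'a set \<Rightarrow> nat \<Rightarrow> 'a option list set" where
  "full_ctxs Alph k = map Some ` {v \<in> lists Alph. length v = k}"

(* Nodes of context outside full_ctxs have depth less than k, so the first component
   determines all remaining n_{w,c}. *)
definition trie_stats :: "'a set \<Rightarrow> nat \<Rightarrow> 'a list set \<Rightarrow> 'a list set \<times> ('a option list \<times> 'a \<Rightarrow> nat)" where
  "trie_stats Alph k T =
     (T \<inter> {u. length u \<le> k}, restrict (\<lambda>(w, c). n_ctx_sym T k w c) (full_ctxs Alph k \<times> Alph))"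

lemma length_less_if_tctx_notin_full_ctxs:
  assumes "u \<in> lists Alph" "tctx k u \<notin> full_ctxs Alph k"
  shows "length u < k"
proof (rule ccontr)
  assume "\<not> length u < k"
  then have "tctx k u = map Some (drop (length u - k) u)"
    and "drop (length u - k) u \<in> {v \<in> lists Alph. length v = k}"
    using assms(1) by (auto simp: tctx_eq dest: in_set_dropD)
  then show False
    using assms(2) unfolding full_ctxs_def by blast
qed

lemma n_ctx_sym_eq_if_trie_stats_eq:
  assumes S1: "is_trie Alph S1" and S2: "is_trie Alph S2"
    and stats: "trie_stats Alph k S1 = trie_stats Alph k S2"
  shows "n_ctx_sym S1 k w c = n_ctx_sym S2 k w c"
proof (cases "w \<in> full_ctxs Alph k \<and> c \<in> Alph")
  case True
  then show ?thesis
    using stats by (auto simp: trie_stats_def dest: fun_cong[of _ _ "(w, c)"])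
next
  case False
  have top: "length u \<le> k \<Longrightarrow> u \<in> S1 \<longleftrightarrow> u \<in> S2" for u
    using stats by (auto simp: trie_stats_def)
  have short: "length u < k" if "is_trie Alph S" "u \<in> S" "tctx k u = w" "c \<in> tout S u" for S u
  proof -
    have "c \<in> Alph"
      using tout_subset[OF that(1)] that(4) by blast
    then show ?thesis
      using False that(3) length_less_if_tctx_notin_full_ctxs[OF is_trie_lists[OF that(1,2)]] by blast
  qed
  have "{u \<in> S1. tctx k u = w \<and> c \<in> tout S1 u} = {u \<in> S2. tctx k u = w \<and> c \<in> tout S2 u}"
  proof (intro set_eqI iffI)
    fix u assume "u \<in> {u \<in> S1. tctx k u = w \<and> c \<in> tout S1 u}"
    then show "u \<in> {u \<in> S2. tctx k u = w \<and> c \<in> tout S2 u}"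
      using short[OF S1, of u] top[of u] top[of "u @ [c]"] by (auto simp: tout_def)
  next
    fix u assume "u \<in> {u \<in> S2. tctx k u = w \<and> c \<in> tout S2 u}"
    then show "u \<in> {u \<in> S1. tctx k u = w \<and> c \<in> tout S1 u}"
      using short[OF S2, of u] top[of u] top[of "u @ [c]"] by (auto simp: tout_def)
  qed
  then show ?thesis
    by (simp add: n_ctx_sym_def)
qed

lemma n_ctx_Suc_snoc_Some:
  assumes S: "is_trie Alph S" and "finite Alph"
  shows "n_ctx S (Suc k) (w @ [Some c]) = (\<Sum>a\<in>insert None (Some ` Alph). n_ctx_sym S (Suc k) (a # w) c)"
proof -
  let ?P = "{p \<in> S. tctx k p = w \<and> c \<in> tout S p}"
  have "{u \<in> S. tctx (Suc k) u = w @ [Some c]} = (\<lambda>p. p @ [c]) ` ?P"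
  proof (intro set_eqI iffI)
    fix u assume u: "u \<in> {u \<in> S. tctx (Suc k) u = w @ [Some c]}"
    then obtain p where "u = p @ [c]" "tctx k p = w"
      by (cases u rule: rev_exhaust) (auto simp: tparent_def tlabel_def)
    then show "u \<in> (\<lambda>p. p @ [c]) ` ?P"
      using u is_trie_prefix[OF S] by (auto simp: tout_def)
  qed (auto simp: tparent_def tlabel_def tout_def)
  then have "n_ctx S (Suc k) (w @ [Some c]) = card ?P"
    unfolding n_ctx_def by (simp add: card_image inj_on_def)
  also have "\<dots> = (\<Sum>a\<in>insert None (Some ` Alph). card {p\<in>?P. hd (tctx (Suc k) p) = a})"
  proof (rule card_eq_sum_card_fibres)
    show "(\<lambda>p. hd (tctx (Suc k) p)) ` ?P \<subseteq> insert None (Some ` Alph)"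
    proof (rule image_subsetI)
      fix p assume "p \<in> ?P"
      then have "set (tctx (Suc k) p) \<subseteq> insert None (Some ` Alph)"
        by (intro set_tctx_subset is_trie_lists[OF S]) simp
      moreover have "hd (tctx (Suc k) p) \<in> set (tctx (Suc k) p)"
        by (rule hd_in_set) simp
      ultimately show "hd (tctx (Suc k) p) \<in> insert None (Some ` Alph)" by blast
    qed
  qed (use is_trie_finite[OF S] \<open>finite Alph\<close> in auto)
  also have "\<dots> = (\<Sum>a\<in>insert None (Some ` Alph). n_ctx_sym S (Suc k) (a # w) c)"
  proof -
    have "tctx (Suc k) p = a # w \<longleftrightarrow> hd (tctx (Suc k) p) = a \<and> tctx k p = w" for p a
      by (subst tctx_Suc_eq_Cons) simp
    then show ?thesis
      unfolding n_ctx_sym_def by (intro sum.cong refl arg_cong[of _ _ card]) auto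
  qed
  finally show ?thesis .
qed

lemma n_ctx_eq_if_n_ctx_sym_eq:
  assumes "finite Alph" and S1: "is_trie Alph S1" and S2: "is_trie Alph S2"
    and "card S1 = card S2" and sym: "\<And>w c. n_ctx_sym S1 k w c = n_ctx_sym S2 k w c"
  shows "n_ctx S1 k w = n_ctx S2 k w"
proof (cases k)
  case 0
  then show ?thesis
    using \<open>card S1 = card S2\<close> by (cases "w = []") (simp_all add: n_ctx_def)
next
  case (Suc k')
  consider "w = []" | w' where "w = w' @ [None]" | w' c where "w = w' @ [Some c]"
    by (metis option.exhaust rev_exhaust)
  then show ?thesis
  proof cases
    case 1
    then have "tctx k u \<noteq> w" for u
      using Suc by (metis length_tctx list.size(3) nat.distinct(1))
    then show ?thesis
      by (simp add: n_ctx_def)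
  next
    case 2
    then have "tctx k u = w \<Longrightarrow> u = []" for u
      using Suc by (metis tctx_snoc_None_imp_Nil)
    then have "{u \<in> S. tctx k u = w} = {u. u = [] \<and> tctx k [] = w}" if "is_trie Alph S" for S
      using is_trie_Nil[OF that] by auto
    then show ?thesis
      using S1 S2 by (simp add: n_ctx_def)
  next
    case 3
    then show ?thesis
      using Suc sym n_ctx_Suc_snoc_Some[OF S1 \<open>finite Alph\<close>] n_ctx_Suc_snoc_Some[OF S2 \<open>finite Alph\<close>]
      by simp
  qed
qed

lemma tctx_image_eq_if_n_ctx_eq:
  assumes "finite S1" "finite S2" "\<And>w. n_ctx S1 k w = n_ctx S2 k w"
  shows "tctx k ` S1 = tctx k ` S2"
proof (rule set_eqI)
  fix w
  show "w \<in> tctx k ` S1 \<longleftrightarrow> w \<in> tctx k ` S2"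
    using n_ctx_pos_iff[OF assms(1), of k w] n_ctx_pos_iff[OF assms(2), of k w] assms(3)[of w]
    by metis
qed

lemma n_ctx_eq_if_trie_stats_eq:
  assumes "finite Alph" "is_trie Alph S1" "is_trie Alph S2" "card S1 = card S2"
    and "trie_stats Alph k S1 = trie_stats Alph k S2"
  shows "n_ctx S1 k w = n_ctx S2 k w"
  by (rule n_ctx_eq_if_n_ctx_sym_eq[OF assms(1-4)]) (rule n_ctx_sym_eq_if_trie_stats_eq[OF assms(2,3,5)])

lemma tctx_image_eq_if_trie_stats_eq:
  assumes "finite Alph" "is_trie Alph S1" "is_trie Alph S2" "card S1 = card S2"
    and "trie_stats Alph k S1 = trie_stats Alph k S2"
  shows "tctx k ` S1 = tctx k ` S2"
  using is_trie_finite[OF assms(2)] is_trie_finite[OF assms(3)] n_ctx_eq_if_trie_stats_eq[OF assms]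
  by (rule tctx_image_eq_if_n_ctx_eq)

lemma trie_eq_if_trie_stats_child_ranks_eq:
  fixes Alph :: "'a::linorder set"
  assumes "finite Alph" and S1: "is_trie Alph S1" and S2: "is_trie Alph S2"
    and "card S1 = card S2" "trie_stats Alph k S1 = trie_stats Alph k S2"
    and ranks: "\<And>w c. (w, c) \<in> tctx k ` S1 \<times> Alph \<Longrightarrow> child_ranks S1 k w c = child_ranks S2 k w c"
  shows "S1 = S2"
proof (rule trie_eq_if_child_ranks_eq[OF S1 S2])
  fix w c
  show "child_ranks S1 k w c = child_ranks S2 k w c"
  proof (cases "(w, c) \<in> tctx k ` S1 \<times> Alph")
    case False
    moreover have "tctx k ` S1 = tctx k ` S2"
      using assms(1-5) by (rule tctx_image_eq_if_trie_stats_eq)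
    ultimately show ?thesis
      using child_ranks_eq_empty[OF S1] child_ranks_eq_empty[OF S2] by simp
  qed (rule ranks)
qed

lemma child_ranks_mem_subsets:
  fixes Alph :: "'a::linorder set"
  assumes "finite Alph" and S: "is_trie Alph S" and S0: "is_trie Alph S0"
    and "card S = card S0" "trie_stats Alph k S = trie_stats Alph k S0"
  shows "child_ranks S k w c \<in> {G. G \<subseteq> {..<n_ctx S0 k w} \<and> card G = n_ctx_sym S0 k w c}"
  using child_ranks_subset[OF is_trie_finite[OF S], of k w c] card_child_ranks[OF is_trie_finite[OF S], of k w c]
    n_ctx_sym_eq_if_trie_stats_eq[OF S S0 assms(5), of w c] n_ctx_eq_if_trie_stats_eq[OF assms, of w]
  by simp

lemma card_tries_with_stats_le:
  fixes Alph :: "'a::linorder set"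
  assumes "finite Alph" "is_trie Alph S0"
  shows "card {S. is_trie Alph S \<and> card S = card S0 \<and> trie_stats Alph k S = trie_stats Alph k S0}
    \<le> (\<Prod>(w, c)\<in>tctx k ` S0 \<times> Alph. n_ctx S0 k w choose n_ctx_sym S0 k w c)"
proof -
  let ?F = "{S. is_trie Alph S \<and> card S = card S0 \<and> trie_stats Alph k S = trie_stats Alph k S0}"
  let ?C = "tctx k ` S0 \<times> Alph"
  let ?B = "\<lambda>(w, c). {G. G \<subseteq> {..<n_ctx S0 k w} \<and> card G = n_ctx_sym S0 k w c}"
  define ranks where "ranks S = restrict (\<lambda>(w, c). child_ranks S k w c) ?C" for S
  have fin: "finite ?C"
    using assms is_trie_finite by blast
  have "inj_on ranks ?F"
  proof (rule inj_onI)
    fix S S' assume S: "S \<in> ?F" and S': "S' \<in> ?F" and "ranks S = ranks S'"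
    have "tctx k ` S = tctx k ` S0"
      using S assms by (intro tctx_image_eq_if_trie_stats_eq) auto
    show "S = S'"
    proof (rule trie_eq_if_trie_stats_child_ranks_eq[OF assms(1)])
      fix w c assume "(w, c) \<in> tctx k ` S \<times> Alph"
      then show "child_ranks S k w c = child_ranks S' k w c"
        using fun_cong[OF \<open>ranks S = ranks S'\<close>, of "(w, c)"] \<open>tctx k ` S = tctx k ` S0\<close>
        by (simp add: ranks_def)
    qed (use S S' in auto)
  qed
  moreover have "ranks ` ?F \<subseteq> Pi\<^sub>E ?C ?B"
  proof (rule image_subsetI)
    fix S assume "S \<in> ?F"
    then have "child_ranks S k w c \<in> ?B (w, c)" for w c
      using child_ranks_mem_subsets[OF assms(1) _ assms(2)] by simp
    then show "ranks S \<in> Pi\<^sub>E ?C ?B"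
      by (auto simp: ranks_def)
  qed
  moreover have "finite (Pi\<^sub>E ?C ?B)"
    by (rule finite_PiE[OF fin]) (auto intro: finite_subset[of _ "Pow {..<_}"])
  ultimately have "card ?F \<le> card (Pi\<^sub>E ?C ?B)"
    by (intro card_inj_on_le)
  also have "\<dots> = (\<Prod>(w, c)\<in>?C. n_ctx S0 k w choose n_ctx_sym S0 k w c)"
    using fin by (simp add: card_PiE n_subsets case_prod_beta)
  finally show ?thesis .
qed

lemma card_tries_with_stats_le_powr:
  fixes Alph :: "'a::linorder set"
  assumes "finite Alph" "is_trie Alph S0"
  shows "real (card {S. is_trie Alph S \<and> card S = card S0 \<and> trie_stats Alph k S = trie_stats Alph k S0})
    \<le> 2 powr (real (card S0) * trie_entropy Alph k S0)"
proof -
  have "real (card {S. is_trie Alph S \<and> card S = card S0 \<and> trie_stats Alph k S = trie_stats Alph k S0})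
      \<le> real (\<Prod>(w, c)\<in>tctx k ` S0 \<times> Alph. n_ctx S0 k w choose n_ctx_sym S0 k w c)"
    using card_tries_with_stats_le[OF assms] by (rule of_nat_mono)
  also have "\<dots> = (\<Prod>(w, c)\<in>tctx k ` S0 \<times> Alph. real (n_ctx S0 k w choose n_ctx_sym S0 k w c))"
    by (simp add: of_nat_prod case_prod_beta)
  also have "\<dots> \<le> 2 powr (real (card S0) * trie_entropy Alph k S0)"
    using is_trie_finite[OF assms(2)] by (rule prod_choose_le_powr_entropy)
  finally show ?thesis .
qed

lemma card_tries_entropy_le_card_stats:
  fixes Alph :: "'a::linorder set"
  assumes "finite Alph"
  shows "real (card {T. is_trie Alph T \<and> card T = n \<and> real n * trie_entropy Alph k T \<le> h})
    \<le> real (card (trie_stats Alph k ` {T. is_trie Alph T \<and> card T = n})) * 2 powr h"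
proof -
  let ?X = "{T. is_trie Alph T \<and> card T = n}"
  let ?Y = "{T. is_trie Alph T \<and> card T = n \<and> real n * trie_entropy Alph k T \<le> h}"
  have fibre: "real (card {T\<in>?Y. trie_stats Alph k T = s}) \<le> 2 powr h" for s
  proof (cases "\<exists>S0\<in>?Y. trie_stats Alph k S0 = s")
    case True
    then obtain S0 where S0: "S0 \<in> ?Y" "trie_stats Alph k S0 = s" ..
    let ?F = "{S. is_trie Alph S \<and> card S = card S0 \<and> trie_stats Alph k S = trie_stats Alph k S0}"
    have "finite ?F"
      by (rule finite_subset[OF _ finite_tries[OF assms, of "card S0"]]) auto
    then have "card {T\<in>?Y. trie_stats Alph k T = s} \<le> card ?F"
      by (rule card_mono) (use S0 in auto)
    then have "real (card {T\<in>?Y. trie_stats Alph k T = s}) \<le> 2 powr (real (card S0) * trie_entropy Alph k S0)"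
      using card_tries_with_stats_le_powr[OF assms, of S0 k] S0(1) by simp
    also have "\<dots> \<le> 2 powr h"
      using S0(1) by simp
    finally show ?thesis .
  next
    case False
    then have "{T\<in>?Y. trie_stats Alph k T = s} = {}"
      by blast
    then show ?thesis
      by (metis card.empty of_nat_0 powr_ge_zero)
  qed
  have "card ?Y = (\<Sum>s\<in>trie_stats Alph k ` ?X. card {T\<in>?Y. trie_stats Alph k T = s})"
    using finite_tries[OF assms, of n]
    by (intro card_eq_sum_card_fibres finite_subset[OF _ finite_tries[OF assms, of n]]) auto
  then have "real (card ?Y) = (\<Sum>s\<in>trie_stats Alph k ` ?X. real (card {T\<in>?Y. trie_stats Alph k T = s}))"
    by simp
  also have "\<dots> \<le> (\<Sum>s\<in>trie_stats Alph k ` ?X. 2 powr h)"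
    by (rule sum_mono) (rule fibre)
  finally show ?thesis by simp
qed

section \<open>Counting statistics\<close>

lemma card_full_ctxs:
  assumes "finite Alph"
  shows "card (full_ctxs Alph k) = card Alph ^ k"
proof -
  have "card (full_ctxs Alph k) = card {xs. set xs \<subseteq> Alph \<and> length xs = k}"
    unfolding full_ctxs_def by (subst card_image) (auto simp: inj_on_def lists_eq_set)
  then show ?thesis
    using card_lists_length_eq[OF assms] by simp
qed

lemma card_trie_stats_le:
  assumes "finite Alph"
  shows "card (trie_stats Alph k ` {T. is_trie Alph T \<and> card T = n})
    \<le> 2 ^ (\<Sum>i\<le>k. card Alph ^ i) * n ^ (card Alph ^ k * card Alph)"
proof -
  let ?Top = "{xs. set xs \<subseteq> Alph \<and> length xs \<le> k}"
  let ?C = "full_ctxs Alph k \<times> Alph"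
  have fin: "finite ?Top" "finite ?C"
    using assms by (auto simp: finite_lists_length_le finite_lists_length_eq full_ctxs_def lists_eq_set)
  have "trie_stats Alph k T \<in> Pow ?Top \<times> Pi\<^sub>E ?C (\<lambda>_. {..<n})" if "is_trie Alph T" "card T = n" for T
  proof -
    have "T \<inter> {u. length u \<le> k} \<subseteq> ?Top"
      using is_trie_lists[OF that(1)] by (auto simp: in_lists_conv_set)
    moreover have "n_ctx_sym T k w c < n" for w c
      using n_ctx_sym_less_card[OF that(1)] that(2) by simp
    ultimately show ?thesis
      by (auto simp: trie_stats_def)
  qed
  then have "trie_stats Alph k ` {T. is_trie Alph T \<and> card T = n} \<subseteq> Pow ?Top \<times> Pi\<^sub>E ?C (\<lambda>_. {..<n})"
    by blast
  then have "card (trie_stats Alph k ` {T. is_trie Alph T \<and> card T = n})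
      \<le> card (Pow ?Top \<times> Pi\<^sub>E ?C (\<lambda>_. {..<n}))"
    using fin by (intro card_mono) (auto simp: finite_PiE)
  also have "\<dots> = 2 ^ (\<Sum>i\<le>k. card Alph ^ i) * n ^ (card Alph ^ k * card Alph)"
    using fin assms by (simp add: card_cartesian_product card_Pow card_PiE card_lists_length_le card_full_ctxs)
  finally show ?thesis .
qed

lemma sum_powers_less_twice_power:
  assumes "(s::nat) \<ge> 2"
  shows "(\<Sum>i\<le>k. s ^ i) < 2 * s ^ k"
proof (induction k)
  case (Suc k)
  have "2 * s ^ k \<le> s * s ^ k"
    using assms by (intro mult_right_mono) auto
  moreover have "(\<Sum>i\<le>Suc k. s ^ i) = (\<Sum>i\<le>k. s ^ i) + s * s ^ k"
    by simp
  moreover have "s ^ Suc k = s * s ^ k"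
    by simp
  ultimately show ?case
    using Suc by linarith
qed simp

lemma log2_of_nat_nonneg: "0 \<le> log 2 (real n)"
  by (cases "n = 0") (simp_all add: log_def)

lemma le_two_power_ceiling_log:
  assumes "0 < n"
  shows "n \<le> 2 ^ nat \<lceil>log 2 (real n)\<rceil>"
proof -
  have "real n = 2 powr log 2 (real n)"
    using assms by simp
  also have "\<dots> \<le> 2 powr real (nat \<lceil>log 2 (real n)\<rceil>)"
    using log2_of_nat_nonneg[of n] by (intro powr_mono) linarith+
  also have "\<dots> = real (2 ^ nat \<lceil>log 2 (real n)\<rceil>)"
    by (simp add: powr_realpow)
  finally show ?thesis
    by (simp only: of_nat_le_iff)
qed

lemma stats_bound_le_powr_log:
  assumes "(s::nat) \<ge> 2" "n \<ge> 3"
  shows "real (2 ^ (\<Sum>i\<le>k. s ^ i) * n ^ (s ^ k * s))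
    \<le> 2 powr (real ((s + 1) * s ^ k) * real_of_int \<lceil>log 2 (real n)\<rceil>)"
proof -
  define L where "L = nat \<lceil>log 2 (real n)\<rceil>"
  have "1 < log 2 (real n)"
    using assms(2) by (simp add: less_log_iff)
  then have L: "2 \<le> L" "real_of_int \<lceil>log 2 (real n)\<rceil> = real L"
    unfolding L_def by linarith+
  have "n \<le> 2 ^ L"
    unfolding L_def using assms(2) by (intro le_two_power_ceiling_log) simp
  have "(\<Sum>i\<le>k. s ^ i) \<le> L * s ^ k"
    using sum_powers_less_twice_power[OF assms(1), of k] mult_le_mono1[OF L(1), of "s ^ k"]
    by linarith
  then have "(2::nat) ^ (\<Sum>i\<le>k. s ^ i) \<le> 2 ^ (L * s ^ k)"
    by (rule power_increasing) simp
  moreover have "n ^ (s ^ k * s) \<le> 2 ^ (L * (s ^ k * s))"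
    using power_mono[OF \<open>n \<le> 2 ^ L\<close>, of "s ^ k * s"] by (simp add: power_mult)
  ultimately have "2 ^ (\<Sum>i\<le>k. s ^ i) * n ^ (s ^ k * s) \<le> (2::nat) ^ (L * s ^ k) * 2 ^ (L * (s ^ k * s))"
    by (rule mult_le_mono)
  also have "\<dots> = 2 ^ (L * ((s + 1) * s ^ k))"
    by (simp add: algebra_simps flip: power_add)
  finally have "real (2 ^ (\<Sum>i\<le>k. s ^ i) * n ^ (s ^ k * s)) \<le> real ((2::nat) ^ (L * ((s + 1) * s ^ k)))"
    by (rule of_nat_mono)
  also have "\<dots> = 2 powr real (L * ((s + 1) * s ^ k))"
    by (subst powr_realpow) simp_all
  also have "\<dots> = 2 powr (real ((s + 1) * s ^ k) * real_of_int \<lceil>log 2 (real n)\<rceil>)"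
    by (simp only: L(2) of_nat_mult mult.commute)
  finally show ?thesis .
qed

section \<open>Small alphabets and small tries\<close>

lemma lists_eq_if_length_eq:
  assumes "finite Alph" "card Alph \<le> 1" "u \<in> lists Alph" "v \<in> lists Alph" "length u = length v"
  shows "u = v"
proof (rule nth_equalityI)
  fix i assume "i < length u"
  then have "u ! i \<in> Alph" "v ! i \<in> Alph"
    using assms(3-5) by (auto simp: in_lists_conv_set)
  then show "u ! i = v ! i"
    using assms(1,2) card_le_Suc0_iff_eq by auto
qed (rule assms(5))

lemma trie_eq_lists_length_less:
  assumes "is_trie Alph T" "inj_on length {u \<in> lists Alph. length u < card T}"
  shows "T = {u \<in> lists Alph. length u < card T}"
proof (rule card_seteq)
  let ?U = "{u \<in> lists Alph. length u < card T}"
  have "length ` ?U \<subseteq> {..<card T}"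
    by auto
  then show "finite ?U"
    using assms(2) finite_imageD finite_subset by blast
  show "T \<subseteq> ?U"
    using assms(1) is_trie_lists length_less_card_trie by blast
  show "card ?U \<le> card T"
    using card_inj_on_le[OF assms(2) \<open>length ` ?U \<subseteq> {..<card T}\<close>] by simp
qed

lemma card_tries_le_1:
  assumes "finite Alph" "card Alph \<le> 1 \<or> n \<le> 1"
  shows "card {T. is_trie Alph T \<and> card T = n} \<le> 1"
proof -
  have "inj_on length {u \<in> lists Alph. length u < n}"
  proof (rule inj_onI)
    fix u v assume u: "u \<in> {u \<in> lists Alph. length u < n}" and v: "v \<in> {u \<in> lists Alph. length u < n}"
      and "length u = length v"
    show "u = v"
    proof (cases "card Alph \<le> 1")
      case True
      then show ?thesis
        using lists_eq_if_length_eq[OF assms(1) True] u v \<open>length u = length v\<close> by blast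
    next
      case False
      then have "n \<le> 1"
        using assms(2) by simp
      moreover have "length u < n" "length v < n"
        using u v by simp_all
      ultimately have "length u < 1" "length v < 1"
        by linarith+
      then show ?thesis
        by simp
    qed
  qed
  then have "{T. is_trie Alph T \<and> card T = n} \<subseteq> {{u \<in> lists Alph. length u < n}}"
    using trie_eq_lists_length_less by blast
  then have "card {T. is_trie Alph T \<and> card T = n} \<le> card {{u \<in> lists Alph. length u < n}}"
    by (rule card_mono[rotated]) simp
  then show ?thesis
    by simp
qed

lemma card_small_tries_le_powr:
  assumes "finite Alph" "card Alph \<le> 1 \<or> n \<le> 2"
  shows "real (card {T. is_trie Alph T \<and> card T = n})
    \<le> 2 powr (real ((card Alph + 1) * card Alph ^ k) * real_of_int \<lceil>log 2 (real n)\<rceil>)"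
proof (cases "card Alph \<le> 1 \<or> n \<le> 1")
  case True
  have "1 \<le> 2 powr (real ((card Alph + 1) * card Alph ^ k) * real_of_int \<lceil>log 2 (real n)\<rceil>)"
    using log2_of_nat_nonneg[of n] by (intro ge_one_powr_ge_zero) auto
  then show ?thesis
    using card_tries_le_1[OF assms(1) True] by linarith
next
  case False
  then have "n = 2" "1 \<le> card Alph ^ k"
    using assms(2) by auto
  then have "card Alph + 1 \<le> (card Alph + 1) * card Alph ^ k"
    using mult_le_mono2[of 1 "card Alph ^ k" "card Alph + 1"] by simp
  moreover have "real_of_int \<lceil>log 2 (real n)\<rceil> = 1"
    using \<open>n = 2\<close> by simp
  ultimately have "real (card Alph + 1) \<le> real ((card Alph + 1) * card Alph ^ k) * real_of_int \<lceil>log 2 (real n)\<rceil>"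
    by (simp only: mult_1_right of_nat_le_iff)
  then have "2 powr real (card Alph + 1)
      \<le> 2 powr (real ((card Alph + 1) * card Alph ^ k) * real_of_int \<lceil>log 2 (real n)\<rceil>)"
    by (rule powr_mono) simp
  moreover have "card {T. is_trie Alph T \<and> card T = n} \<le> 2 ^ (card Alph + 1)"
    using card_tries_le[OF assms(1), of n] \<open>n = 2\<close> by (simp add: numeral_2_eq_2)
  then have "real (card {T. is_trie Alph T \<and> card T = n}) \<le> real (2 ^ (card Alph + 1))"
    by (rule of_nat_mono)
  then have "real (card {T. is_trie Alph T \<and> card T = n}) \<le> 2 powr real (card Alph + 1)"
    by (subst powr_realpow) simp_all
  ultimately show ?thesis
    by linarith
qed

lemma card_trie_stats_le_powr:
  assumes "finite Alph" "2 \<le> card Alph" "3 \<le> n"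
  shows "real (card (trie_stats Alph k ` {T. is_trie Alph T \<and> card T = n}))
    \<le> 2 powr (real ((card Alph + 1) * card Alph ^ k) * real_of_int \<lceil>log 2 (real n)\<rceil>)"
proof -
  have "real (card (trie_stats Alph k ` {T. is_trie Alph T \<and> card T = n}))
      \<le> real (2 ^ (\<Sum>i\<le>k. card Alph ^ i) * n ^ (card Alph ^ k * card Alph))"
    by (rule of_nat_mono) (rule card_trie_stats_le[OF assms(1)])
  also have "\<dots> \<le> 2 powr (real ((card Alph + 1) * card Alph ^ k) * real_of_int \<lceil>log 2 (real n)\<rceil>)"
    by (rule stats_bound_le_powr_log[OF assms(2,3)])
  finally show ?thesis .
qed

lemma card_tries_entropy_le:
  fixes Alph :: "'a::linorder set"
  assumes "finite Alph"
  shows "real (card {T. is_trie Alph T \<and> card T = n \<and> real n * trie_entropy Alph k T \<le> h})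
    \<le> 2 powr (h + real ((card Alph + 1) * card Alph ^ k) * real_of_int \<lceil>log 2 (real n)\<rceil>)"
proof -
  let ?X = "{T. is_trie Alph T \<and> card T = n}"
  let ?Y = "{T. is_trie Alph T \<and> card T = n \<and> real n * trie_entropy Alph k T \<le> h}"
  let ?D = "real ((card Alph + 1) * card Alph ^ k) * real_of_int \<lceil>log 2 (real n)\<rceil>"
  consider "h < 0" | "0 \<le> h" "card Alph \<le> 1 \<or> n \<le> 2" | "2 \<le> card Alph" "3 \<le> n"
    by linarith
  then show ?thesis
  proof cases
    case 1
    have "?Y = {}"
    proof (rule equals0I)
      fix T assume "T \<in> ?Y"
      then have "0 \<le> trie_entropy Alph k T" "real n * trie_entropy Alph k T \<le> h"
        using trie_entropy_nonneg[OF is_trie_finite] by auto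
      then have "0 \<le> real n * trie_entropy Alph k T"
        by simp
      then show False
        using 1 \<open>real n * trie_entropy Alph k T \<le> h\<close> by linarith
    qed
    then show ?thesis
      unfolding \<open>?Y = {}\<close> by simp
  next
    case 2
    have "card ?Y \<le> card ?X"
      by (intro card_mono finite_tries[OF assms]) auto
    then have "real (card ?Y) \<le> 2 powr ?D"
      using card_small_tries_le_powr[OF assms 2(2), of k] by linarith
    also have "\<dots> \<le> 2 powr (h + ?D)"
      using 2(1) by (intro powr_mono) auto
    finally show ?thesis .
  next
    case 3
    have "real (card ?Y) \<le> real (card (trie_stats Alph k ` ?X)) * 2 powr h"
      by (rule card_tries_entropy_le_card_stats[OF assms])
    also have "\<dots> \<le> 2 powr ?D * 2 powr h"
      using card_trie_stats_le_powr[OF assms 3] by (rule mult_right_mono) simp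
    also have "\<dots> = 2 powr (h + ?D)"
      by (simp add: powr_add)
    finally show ?thesis .
  qed
qed

theorem theorem2:
  fixes Alph :: "'a::linorder set" and k n :: nat
  assumes "finite Alph"
  shows "\<exists>E :: 'a list set \<Rightarrow> bool list.
           inj_on E {T. is_trie Alph T \<and> card T = n} \<and>
           (\<forall>T. is_trie Alph T \<and> card T = n \<longrightarrow>
              real (length (E T)) \<le> real n * trie_entropy Alph k T + 2
                + real ((card Alph + 1) * card Alph ^ k) * real_of_int \<lceil>log 2 (real n)\<rceil>)"
proof -
  let ?X = "{T. is_trie Alph T \<and> card T = n}"
  define D where "D = real ((card Alph + 1) * card Alph ^ k) * real_of_int \<lceil>log 2 (real n)\<rceil>"
  have "0 \<le> D"
    unfolding D_def using log2_of_nat_nonneg[of n] by (intro mult_nonneg_nonneg) auto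
  have "\<exists>E :: 'a list set \<Rightarrow> bool list.
      inj_on E ?X \<and> (\<forall>T\<in>?X. real (length (E T)) \<le> real n * trie_entropy Alph k T + 2 + D)"
  proof (rule ex_inj_code_length_le[OF finite_tries[OF assms]])
    fix T assume "T \<in> ?X"
    then have "0 \<le> trie_entropy Alph k T"
      by (intro trie_entropy_nonneg is_trie_finite) auto
    then show "0 \<le> real n * trie_entropy Alph k T + 2 + D"
      using \<open>0 \<le> D\<close> by simp
  next
    fix h
    have "real (card {T\<in>?X. real n * trie_entropy Alph k T + 2 + D \<le> h}) \<le> 2 powr (h - 2 - D + D)"
      using card_tries_entropy_le[OF assms, of n k "h - 2 - D", folded D_def]
      by (simp add: algebra_simps)
    also have "\<dots> \<le> 2 powr (h - 1)"
      by (intro powr_mono) auto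
    finally show "real (card {T\<in>?X. real n * trie_entropy Alph k T + 2 + D \<le> h}) \<le> 2 powr (h - 1)" .
  qed
  then show ?thesis
    unfolding D_def by auto
qed

end
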